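(* Let $\mathcal{D}_{\text{SEQ}}$ be a temporal sequence database and let $(E_i,E_j)$ be a pair of events occurring in a 2-event temporal pattern $P$ (i.e. $P=\langle (r,E_i,E_j)\rangle$ for some temporal relation $r$). Then $\textit{conf}(P)\le \textit{conf}(E_i,E_j)$.
   Context: A temporal event is a pair $E=(\omega,T)$ with $\omega$ a symbol and $T$ a set of time intervals; an instance of $E$ is $e=(\omega,[t_s,t_e])$ with $[t_s,t_e]\in T$, and $E_{\triangleright e}$ denotes that $e$ is an instance of $E$. The set $\Re$ of temporal relations consists of Follows, Contains, Overlaps, each a condition on the endpoints of a pair of instances $(e_i,e_j)$ (with buffer $\epsilon>0$ and minimal overlap $d_o$, in the paper's notation $t\pm\epsilon$): Follows iff $t_{e_i}\pm\epsilon\le t_{s_j}$; Contains iff $(t_{s_i}\le t_{s_j})\wedge(t_{e_i}\pm\epsilon\ge t_{e_j})$; Overlaps iff $(t_{s_i}<t_{s_j})\wedge(t_{e_i}\pm\epsilon<t_{e_j})\wedge(t_{e_i}-t_{s_j}\ge d_o\pm\epsilon)$. A temporal pattern is a list of triples $(r_{ij},E_i,E_j)$ with $r_{ij}\in\Re$. A temporal sequence is a list of event instances ordered by start time; a temporal sequence database $\mathcal{D}_{\text{SEQ}}$ is a finite collection of temporal sequences. $S$ supports a pattern $P$ iff $|S|\ge2$ and for every triple $(r_{ij},E_i,E_j)\in P$ there exist instances $e_l,e_m$ in $S$ with $r_{ij}$ holding between $E_{i_{\triangleright e_l}}$ and $E_{j_{\triangleright e_m}}$. $\textit{supp}(P)$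 is the number of sequences of $\mathcal{D}_{\text{SEQ}}$ supporting $P$; $\textit{supp}(E)$ is the number of sequences containing an instance of $E$; $\textit{supp}(E_i,E_j)$ is the number of sequences containing an instance of $E_i$ and an instance of $E_j$. Confidence: $\textit{conf}(P)=\textit{supp}(P)/\max_{E_k\in P}\textit{supp}(E_k)$, and $\textit{conf}(E_i,E_j)=\textit{supp}(E_i,E_j)/\max\{\textit{supp}(E_i),\textit{supp}(E_j)\}$. *)

theory Defs
  imports Complex_Main "HOL-Library.Multiset"
begin

text \<open>A temporal event E = (omega, T): a symbol together with a set of time intervals
  [t_s, t_e], represented as pairs (t_s, t_e) of reals.\<close>
type_synonym 'a tevent = "'a \<times> (real \<times> real) set"

type_synonym 'a tinst = "'a \<times> (real \<times> real)"

definition ts :: "'a tinst \<Rightarrow> real" where "ts e = fst (snd e)"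
definition te :: "'a tinst \<Rightarrow> real" where "te e = snd (snd e)"

definition is_instance :: "'a tevent \<Rightarrow> 'a tinst \<Rightarrow> bool" where
  "is_instance E e \<longleftrightarrow> fst e = fst E \<and> snd e \<in> snd E"

datatype trel = Follows | Contains | Overlaps

text \<open>Temporal relations with buffer eps and minimal overlap d_o; "t \<plusminus> eps" is read
  as "t + delta for some |delta| \<le> eps".\<close>
fun rel_holds :: "real \<Rightarrow> real \<Rightarrow> trel \<Rightarrow> 'a tinst \<Rightarrow> 'a tinst \<Rightarrow> bool" where
  "rel_holds eps d_o Follows ei ej \<longleftrightarrow>
     (\<exists>\<delta>. \<bar>\<delta>\<bar> \<le> eps \<and> te ei + \<delta> \<le> ts ej)"
| "rel_holds eps d_o Contains ei ej \<longleftrightarrow>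
     ts ei \<le> ts ej \<and> (\<exists>\<delta>. \<bar>\<delta>\<bar> \<le> eps \<and> te ei + \<delta> \<ge> te ej)"
| "rel_holds eps d_o Overlaps ei ej \<longleftrightarrow>
     ts ei < ts ej \<and> (\<exists>\<delta>. \<bar>\<delta>\<bar> \<le> eps \<and> te ei + \<delta> < te ej)
     \<and> (\<exists>\<delta>. \<bar>\<delta>\<bar> \<le> eps \<and> te ei - ts ej \<ge> d_o + \<delta>)"

type_synonym 'a tpattern = "(trel \<times> 'a tevent \<times> 'a tevent) list"

definition temporal_sequence :: "'a tinst list \<Rightarrow> bool" where
  "temporal_sequence S \<longleftrightarrow> sorted (map ts S)"

definition seq_database :: "'a tinst list multiset \<Rightarrow> bool" where
  "seq_database D \<longleftrightarrow> (\<forall>S \<in># D. temporal_sequence S)"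

definition supports :: "real \<Rightarrow> real \<Rightarrow> 'a tinst list \<Rightarrow> 'a tpattern \<Rightarrow> bool" where
  "supports eps d_o S P \<longleftrightarrow> length S \<ge> 2 \<and>
     (\<forall>(r, Ei, Ej) \<in> set P. \<exists>el \<in> set S. \<exists>em \<in> set S.
        is_instance Ei el \<and> is_instance Ej em \<and> rel_holds eps d_o r el em)"

definition supp_pat :: "real \<Rightarrow> real \<Rightarrow> 'a tinst list multiset \<Rightarrow> 'a tpattern \<Rightarrow> nat" where
  "supp_pat eps d_o D P = size (filter_mset (\<lambda>S. supports eps d_o S P) D)"

definition supp_ev :: "'a tinst list multiset \<Rightarrow> 'a tevent \<Rightarrow> nat" where
  "supp_ev D E = size (filter_mset (\<lambda>S. \<exists>e \<in> set S. is_instance E e) D)"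

definition supp_pair :: "'a tinst list multiset \<Rightarrow> 'a tevent \<Rightarrow> 'a tevent \<Rightarrow> nat" where
  "supp_pair D Ei Ej = size (filter_mset (\<lambda>S. (\<exists>e \<in> set S. is_instance Ei e) \<and>
                                              (\<exists>e \<in> set S. is_instance Ej e)) D)"

definition pattern_events :: "'a tpattern \<Rightarrow> 'a tevent set" where
  "pattern_events P = (\<Union>(r, Ei, Ej) \<in> set P. {Ei, Ej})"

definition conf_pat :: "real \<Rightarrow> real \<Rightarrow> 'a tinst list multiset \<Rightarrow> 'a tpattern \<Rightarrow> real" where
  "conf_pat eps d_o D P =
     real (supp_pat eps d_o D P) / real (Max (supp_ev D ` pattern_events P))"

definition conf_pair :: "'a tinst list multiset \<Rightarrow> 'a tevent \<Rightarrow> 'a tevent \<Rightarrow> real" where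
  "conf_pair D Ei Ej = real (supp_pair D Ei Ej) / real (max (supp_ev D Ei) (supp_ev D Ej))"

end

theory Submission
  imports Defs
begin

text \<open>Every sequence supporting a pattern contains instances of both events of each of its
  triples, so it is counted in the pair support of those events; and for a one-triple pattern
  the denominators of both confidences are the same, max (supp E_i) (supp E_j).\<close>

lemma size_filter_mset_mono:
  assumes "\<And>x. x \<in># M \<Longrightarrow> P x \<Longrightarrow> Q x"
  shows "size (filter_mset P M) \<le> size (filter_mset Q M)"
  using assms by (intro size_mset_mono filter_mset_mono_strong) auto

lemma supports_imp_instances:
  assumes "supports eps d_o S P" and "(r, Ei, Ej) \<in> set P"
  shows "(\<exists>e \<in> set S. is_instance Ei e) \<and> (\<exists>e \<in> set S. is_instance Ej e)"
  using assms unfolding supports_def by fast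

lemma supp_pat_le_supp_pair:
  assumes "(r, Ei, Ej) \<in> set P"
  shows "supp_pat eps d_o D P \<le> supp_pair D Ei Ej"
  unfolding supp_pat_def supp_pair_def
  using supports_imp_instances[OF _ assms] by (intro size_filter_mset_mono) blast

lemma Max_supp_ev_pattern_events_single:
  "Max (supp_ev D ` pattern_events [(r, Ei, Ej)]) = max (supp_ev D Ei) (supp_ev D Ej)"
  by (simp add: pattern_events_def max_def)

theorem lemma3:
  fixes D :: "'a tinst list multiset" and Ei Ej :: "'a tevent" and r :: trel
    and eps d_o :: real
  assumes "eps > 0"
    and "seq_database D"
  shows "conf_pat eps d_o D [(r, Ei, Ej)] \<le> conf_pair D Ei Ej"
proof -
  have "supp_pat eps d_o D [(r, Ei, Ej)] \<le> supp_pair D Ei Ej"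
    by (rule supp_pat_le_supp_pair) simp
  then show ?thesis
    unfolding conf_pat_def conf_pair_def Max_supp_ev_pattern_events_single
    by (simp add: divide_right_mono)
qed

end
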